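(* Let $p$ be a prime and let $\mathcal P$ be the set consisting of $0$, $1$, and all positive integral powers of $p$. Let $G$ be a finite $p$-group of nilpotency class $2$ and $w\in F_k$. Then there exist $t_0,t_1,\dots,t_{k-1}\in\mathcal P$ such that $w$ is $F_k(G)$-automorphic to the word $$x_1^{t_0}[x_1,x_2]^{t_1}[x_2,x_3]^{t_2}\cdots[x_{k-1},x_k]^{t_{k-1}}.$$
   Context: $F_k$ is the free group on $x_1,\dots,x_k$. For a group $G$, each $w\in F_k$ induces a word map $G^k\to G$ by evaluation; the set $F_k(G)$ of all such word maps is a group under pointwise multiplication. Two words $w_1,w_2\in F_k$ are called $F_k(G)$-automorphic if there is a group automorphism of $F_k(G)$ sending the word map of $w_1$ to the word map of $w_2$. Commutators are $[a,b]:=aba^{-1}b^{-1}$. *)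

theory Defs
  imports "HOL-Algebra.Algebra"
begin

text \<open>Words of the free group F_k: lists of letters (i, b), where the letter
  (i, False) stands for the generator x_(i+1) and (i, True) for its inverse,
  with 0 <= i < k.  (Unreduced words; the word map only depends on the
  free-group element represented.)\<close>

type_synonym word = "(nat \<times> bool) list"

definition words :: "nat \<Rightarrow> word set" where
  "words k = {w. \<forall>(i, b) \<in> set w. i < k}"

definition eval_word :: "('a, 'b) monoid_scheme \<Rightarrow> (nat \<Rightarrow> 'a) \<Rightarrow> word \<Rightarrow> 'a" where
  "eval_word G g w =
     foldr (\<lambda>(i, b) acc. (if b then inv\<^bsub>G\<^esub> (g i) else g i) \<otimes>\<^bsub>G\<^esub> acc) w \<one>\<^bsub>G\<^esub>"

definition tuples :: "('a, 'b) monoid_scheme \<Rightarrow> nat \<Rightarrow> (nat \<Rightarrow> 'a) set" where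
  "tuples G k = PiE {..<k} (\<lambda>_. carrier G)"

definition word_map :: "('a, 'b) monoid_scheme \<Rightarrow> nat \<Rightarrow> word \<Rightarrow> ((nat \<Rightarrow> 'a) \<Rightarrow> 'a)" where
  "word_map G k w = (\<lambda>g \<in> tuples G k. eval_word G g w)"

definition word_map_group :: "('a, 'b) monoid_scheme \<Rightarrow> nat \<Rightarrow> ((nat \<Rightarrow> 'a) \<Rightarrow> 'a) monoid" where
  "word_map_group G k =
     \<lparr> carrier = word_map G k ` words k,
       Group.monoid.mult = (\<lambda>f h. \<lambda>g \<in> tuples G k. f g \<otimes>\<^bsub>G\<^esub> h g),
       one = (\<lambda>g \<in> tuples G k. \<one>\<^bsub>G\<^esub>) \<rparr>"

definition automorphic :: "('a, 'b) monoid_scheme \<Rightarrow> nat \<Rightarrow> word \<Rightarrow> word \<Rightarrow> bool" where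
  "automorphic G k w1 w2 \<longleftrightarrow>
     (\<exists>\<phi> \<in> iso (word_map_group G k) (word_map_group G k).
        \<phi> (word_map G k w1) = word_map G k w2)"

definition word_inv :: "word \<Rightarrow> word" where
  "word_inv w = rev (map (\<lambda>(i, b). (i, \<not> b)) w)"

definition word_pow :: "word \<Rightarrow> nat \<Rightarrow> word" where
  "word_pow w n = concat (replicate n w)"

definition word_comm :: "word \<Rightarrow> word \<Rightarrow> word" where
  "word_comm a b = a @ b @ word_inv a @ word_inv b"

definition gen :: "nat \<Rightarrow> word" where
  "gen i = [(i, False)]"

text \<open>x_1^(t_0) [x_1,x_2]^(t_1) ... [x_(k-1),x_k]^(t_(k-1)) (0-indexed letters).\<close>
definition normal_word :: "nat \<Rightarrow> (nat \<Rightarrow> nat) \<Rightarrow> word" where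
  "normal_word k t =
     word_pow (gen 0) (t 0) @
     concat (map (\<lambda>i. word_pow (word_comm (gen (i - 1)) (gen i)) (t i)) [1..<k])"

definition power_set_P :: "nat \<Rightarrow> nat set" where
  "power_set_P p = {0, 1} \<union> {p ^ n | n. n \<ge> 1}"

definition center_of :: "('a, 'b) monoid_scheme \<Rightarrow> 'a set" where
  "center_of G = {z \<in> carrier G. \<forall>x \<in> carrier G. z \<otimes>\<^bsub>G\<^esub> x = x \<otimes>\<^bsub>G\<^esub> z}"

definition nilpotent_class_2 :: "('a, 'b) monoid_scheme \<Rightarrow> bool" where
  "nilpotent_class_2 G \<longleftrightarrow>
     derived G (carrier G) \<subseteq> center_of G \<and> derived G (carrier G) \<noteq> {\<one>\<^bsub>G\<^esub>}"

definition finite_p_group :: "('a, 'b) monoid_scheme \<Rightarrow> nat \<Rightarrow> bool" where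
  "finite_p_group G p \<longleftrightarrow> group G \<and> finite (carrier G) \<and> (\<exists>n. card (carrier G) = p ^ n)"

end

theory Submission
  imports Defs
begin

text \<open>
  F_k(G) is again a finite group of nilpotency class at most 2 whose exponent divides |G|, and it
  is generated by the coordinate maps x_1, ..., x_k.  A substitution x_i \<mapsto> v_i whose images
  still generate F_k(G) induces a surjective, hence bijective, endomorphism of this finite group.
  So it suffices to transform (x_1, ..., x_k) by Nielsen moves (multiplying one entry by another,
  swapping two entries, raising one to a power prime to p) into a tuple (y_1, ..., y_k) with
  w = y_1^(t_0) [y_1,y_2]^(t_1) \<cdots> [y_(k-1),y_k]^(t_(k-1)).

  In a class-2 group every element of \<langle>y_i, ..., y_k\<rangle> has the form y_i^a s c with
  s \<in> \<langle>y_(i+1), ..., y_k\<rangle> and c in the derived subgroup of \<langle>y_i, ..., y_k\<rangle>, and every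
  element of that derived subgroup has the form [y_i, v] z with v \<in> \<langle>y_(i+1), ..., y_k\<rangle> and z
  in the derived subgroup of \<langle>y_(i+1), ..., y_k\<rangle>.  A product y_i^a y_(i+1)^b becomes a single
  power of y_i up to a central factor by running Euclid's algorithm on (a, b) with Nielsen moves,
  and writing the exponent as r p^m with r prime to p, the factor r is absorbed into y_i.
  Induction on i then produces the normal form.
\<close>

section \<open>Commutators and groups of class two\<close>

definition commutator :: "('a, 'b) monoid_scheme \<Rightarrow> 'a \<Rightarrow> 'a \<Rightarrow> 'a" where
  "commutator G x y = x \<otimes>\<^bsub>G\<^esub> y \<otimes>\<^bsub>G\<^esub> inv\<^bsub>G\<^esub> x \<otimes>\<^bsub>G\<^esub> inv\<^bsub>G\<^esub> y"

lemma (in group_hom) hom_commutator: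
  "x \<in> carrier G \<Longrightarrow> y \<in> carrier G \<Longrightarrow> h (commutator G x y) = commutator H (h x) (h y)"
  by (simp add: commutator_def)

context group
begin

lemma inv_mult_cancel_left [simp]: "x \<in> carrier G \<Longrightarrow> y \<in> carrier G \<Longrightarrow> inv x \<otimes> (x \<otimes> y) = y"
  by (simp flip: m_assoc)

lemma commutator_closed [simp]:
  "x \<in> carrier G \<Longrightarrow> y \<in> carrier G \<Longrightarrow> commutator G x y \<in> carrier G"
  by (simp add: commutator_def)

lemma inv_commutator:
  "x \<in> carrier G \<Longrightarrow> y \<in> carrier G \<Longrightarrow> inv (commutator G x y) = commutator G y x"
  by (simp add: commutator_def inv_mult_group m_assoc)

lemma mult_eq_commutator_mult:
  "x \<in> carrier G \<Longrightarrow> y \<in> carrier G \<Longrightarrow> x \<otimes> y = commutator G x y \<otimes> (y \<otimes> x)"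
  by (simp add: commutator_def m_assoc)

lemma commutator_self [simp]: "x \<in> carrier G \<Longrightarrow> commutator G x x = \<one>"
  by (simp add: commutator_def m_assoc)

lemma commutator_one_left [simp]: "x \<in> carrier G \<Longrightarrow> commutator G \<one> x = \<one>"
  by (simp add: commutator_def)

lemma commutator_one_right [simp]: "x \<in> carrier G \<Longrightarrow> commutator G x \<one> = \<one>"
  by (simp add: commutator_def)

lemma commutator_in_derived: "x \<in> H \<Longrightarrow> y \<in> H \<Longrightarrow> commutator G x y \<in> derived G H"
  unfolding derived_def commutator_def by (rule generate.incl) blast

lemma subgroup_nat_pow_closed: "subgroup H G \<Longrightarrow> h \<in> H \<Longrightarrow> h [^] (n::nat) \<in> H"
  using subgroup_int_pow_closed[of H h "int n"] by (simp add: int_pow_int)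

lemma center_subgroup: "subgroup (center_of G) G"
proof (rule subgroupI)
  fix a b assume a: "a \<in> center_of G" and b: "b \<in> center_of G"
  then have ab: "a \<in> carrier G" "b \<in> carrier G" and
    comm: "\<And>z. z \<in> carrier G \<Longrightarrow> a \<otimes> z = z \<otimes> a" "\<And>z. z \<in> carrier G \<Longrightarrow> b \<otimes> z = z \<otimes> b"
    by (auto simp: center_of_def)
  have "inv a \<otimes> z = z \<otimes> inv a" if z: "z \<in> carrier G" for z
  proof -
    have "inv a \<otimes> z = inv a \<otimes> (z \<otimes> a) \<otimes> inv a" using ab z by (simp add: m_assoc)
    also have "\<dots> = z \<otimes> inv a" using ab z by (simp add: comm(1)[OF z, symmetric] m_assoc)
    finally show ?thesis .
  qed
  then show "inv a \<in> center_of G" using ab by (simp add: center_of_def)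
  have "a \<otimes> b \<otimes> z = z \<otimes> (a \<otimes> b)" if z: "z \<in> carrier G" for z
  proof -
    have "a \<otimes> b \<otimes> z = a \<otimes> z \<otimes> b" using ab z by (simp add: m_assoc comm(2))
    also have "\<dots> = z \<otimes> (a \<otimes> b)" using ab z by (simp add: m_assoc comm(1))
    finally show ?thesis .
  qed
  then show "a \<otimes> b \<in> center_of G" using ab by (simp add: center_of_def)
qed (auto simp: center_of_def)

lemma center_commute: "c \<in> center_of G \<Longrightarrow> z \<in> carrier G \<Longrightarrow> c \<otimes> z = z \<otimes> c"
  by (simp add: center_of_def)

lemma center_carrier: "c \<in> center_of G \<Longrightarrow> c \<in> carrier G"
  by (simp add: center_of_def)

lemma center_mult_middle:
  "c \<in> center_of G \<Longrightarrow> a \<in> carrier G \<Longrightarrow> b \<in> carrier G \<Longrightarrow> a \<otimes> c \<otimes> b = a \<otimes> b \<otimes> c"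
  by (simp add: m_assoc center_commute center_carrier)

lemma commutator_center_left:
  assumes "c \<in> center_of G" "y \<in> carrier G" shows "commutator G c y = \<one>"
proof -
  have "commutator G c y = y \<otimes> c \<otimes> inv c \<otimes> inv y"
    using center_commute[OF assms] by (simp add: commutator_def)
  then show ?thesis using assms by (simp add: center_carrier m_assoc)
qed

lemma commutator_center_right: "c \<in> center_of G \<Longrightarrow> y \<in> carrier G \<Longrightarrow> commutator G y c = \<one>"
  by (metis commutator_center_left center_carrier inv_commutator inv_one)

end

definition comm_chain :: "('a, 'b) monoid_scheme \<Rightarrow> (nat \<Rightarrow> 'a) \<Rightarrow> (nat \<Rightarrow> nat) \<Rightarrow> nat \<Rightarrow> nat \<Rightarrow> 'a" where
  "comm_chain G Y t i k =
     foldr (\<lambda>j acc. commutator G (Y (j - 1)) (Y j) [^]\<^bsub>G\<^esub> t j \<otimes>\<^bsub>G\<^esub> acc) [i..<k] \<one>\<^bsub>G\<^esub>"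

lemma comm_chain_empty: "k \<le> i \<Longrightarrow> comm_chain G Y t i k = \<one>\<^bsub>G\<^esub>"
  by (simp add: comm_chain_def)

lemma comm_chain_Suc:
  "i < k \<Longrightarrow> comm_chain G Y t i k =
     commutator G (Y (i - 1)) (Y i) [^]\<^bsub>G\<^esub> t i \<otimes>\<^bsub>G\<^esub> comm_chain G Y t (Suc i) k"
  by (simp add: comm_chain_def upt_rec)

lemma comm_chain_cong:
  "(\<And>j. i \<le> j \<Longrightarrow> j < k \<Longrightarrow> t j = t' j) \<Longrightarrow> (\<And>j. j < k \<Longrightarrow> Y j = Y' j) \<Longrightarrow>
   comm_chain G Y t i k = comm_chain G Y' t' i k"
  unfolding comm_chain_def by (intro arg_cong[where f="\<lambda>f. foldr f _ _"] ext foldr_cong) auto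

lemma (in group) comm_chain_closed:
  assumes Y: "Y \<in> {..<k} \<rightarrow> carrier G" shows "comm_chain G Y t i k \<in> carrier G"
proof (induction "k - i" arbitrary: i)
  case 0
  then show ?case by (simp add: comm_chain_empty)
next
  case (Suc n)
  then have i: "i < k" by simp
  have "commutator G (Y (i - 1)) (Y i) \<in> carrier G" using i funcset_mem[OF Y] by simp
  moreover have "comm_chain G Y t (Suc i) k \<in> carrier G" using Suc.hyps(1)[of "Suc i"] Suc.hyps(2) by simp
  ultimately show ?case using i by (simp add: comm_chain_Suc)
qed

lemma (in group_hom) hom_comm_chain:
  assumes Y: "Y \<in> {..<k} \<rightarrow> carrier G"
  shows "h (comm_chain G Y t i k) = comm_chain H (h \<circ> Y) t i k"
proof (induction "k - i" arbitrary: i)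
  case 0
  then show ?case by (simp add: comm_chain_empty)
next
  case (Suc n)
  then have i: "i < k" by simp
  have c: "commutator G (Y (i - 1)) (Y i) \<in> carrier G" using i funcset_mem[OF Y] by simp
  have "h (comm_chain G Y t (Suc i) k) = comm_chain H (h \<circ> Y) t (Suc i) k"
    using Suc.hyps(1)[of "Suc i"] Suc.hyps(2) by simp
  moreover have "h (commutator G (Y (i - 1)) (Y i) [^] t i) = commutator H (h (Y (i - 1))) (h (Y i)) [^]\<^bsub>H\<^esub> t i"
    using i funcset_mem[OF Y] c by (simp add: hom_nat_pow hom_commutator)
  ultimately show ?case
    using i c G.comm_chain_closed[OF Y, of t "Suc i"] by (simp add: comm_chain_Suc)
qed

context group
begin

definition gen_from :: "(nat \<Rightarrow> 'a) \<Rightarrow> nat \<Rightarrow> nat \<Rightarrow> 'a set" where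
  "gen_from Y i k = generate G (Y ` {i..<k})"

definition derived_from :: "(nat \<Rightarrow> 'a) \<Rightarrow> nat \<Rightarrow> nat \<Rightarrow> 'a set" where
  "derived_from Y i k = derived G (gen_from Y i k)"

lemma gen_from_subgroup: "Y \<in> {..<k} \<rightarrow> carrier G \<Longrightarrow> subgroup (gen_from Y i k) G"
  unfolding gen_from_def by (rule generate_is_subgroup) auto

lemma gen_from_carrier: "Y \<in> {..<k} \<rightarrow> carrier G \<Longrightarrow> x \<in> gen_from Y i k \<Longrightarrow> x \<in> carrier G"
  using subgroup.mem_carrier[OF gen_from_subgroup] .

lemma gen_from_incl: "i \<le> j \<Longrightarrow> j < k \<Longrightarrow> Y j \<in> gen_from Y i k"
  unfolding gen_from_def by (rule generate.incl) auto

lemma gen_from_mono: "i \<le> j \<Longrightarrow> gen_from Y j k \<subseteq> gen_from Y i k"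
  unfolding gen_from_def by (rule mono_generate) auto

lemma gen_from_empty: "gen_from Y k k = {\<one>}"
  by (simp add: gen_from_def generate_empty)

lemma derived_from_subgroup: "Y \<in> {..<k} \<rightarrow> carrier G \<Longrightarrow> subgroup (derived_from Y i k) G"
  unfolding derived_from_def by (rule derived_is_subgroup[OF subgroup.subset[OF gen_from_subgroup]])

lemma derived_from_mono: "i \<le> j \<Longrightarrow> derived_from Y j k \<subseteq> derived_from Y i k"
  unfolding derived_from_def by (rule mono_derived[OF gen_from_mono])

lemma derived_from_empty: "derived_from Y k k = {\<one>}"
proof -
  have "derived_set G {\<one>} = {\<one>}" by auto
  then show ?thesis by (simp add: derived_from_def derived_def gen_from_empty generate_one)
qed

lemma gen_from_eqI:
  assumes "Y \<in> {..<k} \<rightarrow> carrier G" "Y' \<in> {..<k} \<rightarrow> carrier G"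
    and "\<And>l. i \<le> l \<Longrightarrow> l < k \<Longrightarrow> Y' l \<in> gen_from Y i k"
    and "\<And>l. i \<le> l \<Longrightarrow> l < k \<Longrightarrow> Y l \<in> gen_from Y' i k"
  shows "gen_from Y' i k = gen_from Y i k"
proof
  show "gen_from Y' i k \<subseteq> gen_from Y i k"
    unfolding gen_from_def[of Y'] using assms(3)
    by (intro generate_subgroup_incl[OF _ gen_from_subgroup[OF assms(1)]]) auto
  show "gen_from Y i k \<subseteq> gen_from Y' i k"
    unfolding gen_from_def[of Y] using assms(4)
    by (intro generate_subgroup_incl[OF _ gen_from_subgroup[OF assms(2)]]) auto
qed

lemma commutator_in_derived_from:
  "x \<in> gen_from Y i k \<Longrightarrow> y \<in> gen_from Y i k \<Longrightarrow> commutator G x y \<in> derived_from Y i k"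
  unfolding derived_from_def by (rule commutator_in_derived)

end

locale class2_group = group +
  assumes commutator_central: "x \<in> carrier G \<Longrightarrow> y \<in> carrier G \<Longrightarrow> commutator G x y \<in> center_of G"
begin

lemma derived_subset_center: "H \<subseteq> carrier G \<Longrightarrow> derived G H \<subseteq> center_of G"
  unfolding derived_def
  by (rule generate_subgroup_incl[OF _ center_subgroup])
     (use commutator_central in \<open>auto simp: commutator_def\<close>)

lemma commutator_mult_right:
  assumes "x \<in> carrier G" "y \<in> carrier G" "z \<in> carrier G"
  shows "commutator G x (y \<otimes> z) = commutator G x y \<otimes> commutator G x z"
proof -
  have "commutator G x (y \<otimes> z) = (x \<otimes> y \<otimes> inv x) \<otimes> (commutator G x z \<otimes> inv y)"
    using assms by (simp add: commutator_def inv_mult_group m_assoc del: inv_inv)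
  also have "\<dots> = (x \<otimes> y \<otimes> inv x) \<otimes> (inv y \<otimes> commutator G x z)"
    using assms center_commute[OF commutator_central[of x z], of "inv y"] by simp
  also have "\<dots> = commutator G x y \<otimes> commutator G x z"
    using assms by (simp add: commutator_def m_assoc)
  finally show ?thesis .
qed

lemma commutator_mult_left:
  assumes "x \<in> carrier G" "y \<in> carrier G" "z \<in> carrier G"
  shows "commutator G (x \<otimes> y) z = commutator G x z \<otimes> commutator G y z"
proof -
  have "commutator G (x \<otimes> y) z = inv (commutator G z (x \<otimes> y))"
    using assms by (simp add: inv_commutator)
  also have "\<dots> = inv (commutator G z x \<otimes> commutator G z y)"
    using assms by (simp add: commutator_mult_right)
  also have "\<dots> = commutator G y z \<otimes> commutator G x z"
    using assms by (simp add: inv_mult_group inv_commutator)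
  also have "\<dots> = commutator G x z \<otimes> commutator G y z"
    using assms center_commute[OF commutator_central[of x z]] by simp
  finally show ?thesis .
qed

lemma commutator_pow_right:
  "x \<in> carrier G \<Longrightarrow> y \<in> carrier G \<Longrightarrow> commutator G x (y [^] (n::nat)) = commutator G x y [^] n"
  by (induct n) (simp_all add: commutator_mult_right)

lemma commutator_pow_left:
  "x \<in> carrier G \<Longrightarrow> y \<in> carrier G \<Longrightarrow> commutator G (x [^] (n::nat)) y = commutator G x y [^] n"
  by (induct n) (simp_all add: commutator_mult_left)

lemma commutator_inv_right:
  assumes "x \<in> carrier G" "y \<in> carrier G"
  shows "commutator G x (inv y) = inv (commutator G x y)"
proof -
  have "commutator G x (inv y) \<otimes> commutator G x y = \<one>"
    using assms by (simp flip: commutator_mult_right)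
  then show ?thesis using assms by (simp add: inv_equality)
qed

lemma commutator_mult_center_left:
  "x \<in> carrier G \<Longrightarrow> c \<in> center_of G \<Longrightarrow> y \<in> carrier G \<Longrightarrow> commutator G (x \<otimes> c) y = commutator G x y"
  by (simp add: commutator_mult_left commutator_center_left center_carrier)

lemma commutator_mult_center_right:
  "x \<in> carrier G \<Longrightarrow> c \<in> center_of G \<Longrightarrow> y \<in> carrier G \<Longrightarrow> commutator G y (x \<otimes> c) = commutator G y x"
  by (simp add: commutator_mult_right commutator_center_right center_carrier)

text \<open>Moving x past a power of y only costs a commutator, which is central.\<close>
lemma pow_mult_derived:
  assumes K: "subgroup K G" and xy: "x \<in> K" "y \<in> K"
  shows "\<exists>d \<in> derived G K. (x \<otimes> y) [^] (n::nat) = x [^] n \<otimes> y [^] n \<otimes> d"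
proof (induct n)
  case 0
  show ?case using subgroup.one_closed[OF derived_is_subgroup[OF subgroup.subset[OF K]]] by force
next
  case (Suc n)
  then obtain d where d: "d \<in> derived G K" "(x \<otimes> y) [^] n = x [^] n \<otimes> y [^] n \<otimes> d" by blast
  have xc: "x \<in> carrier G" "y \<in> carrier G" using subgroup.mem_carrier[OF K] xy by auto
  have dz: "d \<in> center_of G" using d derived_subset_center[OF subgroup.subset[OF K]] by auto
  define e where "e = commutator G (y [^] n) x"
  have ez: "e \<in> center_of G" using xc commutator_central e_def by auto
  have ed: "e \<in> derived G K"
    unfolding e_def using xy subgroup_nat_pow_closed[OF K] by (intro commutator_in_derived)
  have "(x \<otimes> y) [^] Suc n = x [^] n \<otimes> y [^] n \<otimes> d \<otimes> (x \<otimes> y)" using d by simp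
  also have "\<dots> = x [^] n \<otimes> y [^] n \<otimes> (x \<otimes> y) \<otimes> d"
    using xc dz by (intro center_mult_middle) auto
  also have "\<dots> = x [^] n \<otimes> (y [^] n \<otimes> x) \<otimes> y \<otimes> d"
    using xc center_carrier[OF dz] by (simp add: m_assoc)
  also have "\<dots> = x [^] n \<otimes> (e \<otimes> (x \<otimes> y [^] n)) \<otimes> y \<otimes> d"
    unfolding e_def using xc by (simp add: mult_eq_commutator_mult[symmetric])
  also have "\<dots> = x [^] n \<otimes> (x \<otimes> y [^] n) \<otimes> e \<otimes> y \<otimes> d"
    using xc center_commute[OF ez, of "x \<otimes> y [^] n"] center_carrier[OF ez] by (simp add: m_assoc)
  also have "\<dots> = x [^] n \<otimes> (x \<otimes> y [^] n) \<otimes> y \<otimes> e \<otimes> d"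
    using center_mult_middle[OF ez, of "x [^] n \<otimes> (x \<otimes> y [^] n)" y] xc by simp
  also have "\<dots> = x [^] Suc n \<otimes> y [^] Suc n \<otimes> (e \<otimes> d)"
    using xc center_carrier[OF ez] center_carrier[OF dz] by (simp add: m_assoc)
  finally show ?case
    using ed d(1) subgroup.m_closed[OF derived_is_subgroup[OF subgroup.subset[OF K]]] by blast
qed

lemma pow_mult_pow_collect_le:
  assumes K: "subgroup K G" and xy: "x \<in> K" "y \<in> K" and ab: "a \<le> (b::nat)"
  shows "\<exists>d \<in> derived G K. x [^] a \<otimes> y [^] b = (x \<otimes> y) [^] a \<otimes> y [^] (b - a) \<otimes> d"
proof -
  have sgD: "subgroup (derived G K) G" by (rule derived_is_subgroup[OF subgroup.subset[OF K]])
  have xc: "x \<in> carrier G" "y \<in> carrier G" using subgroup.mem_carrier[OF K] xy by auto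
  obtain d where d: "d \<in> derived G K" "(x \<otimes> y) [^] a = x [^] a \<otimes> y [^] a \<otimes> d"
    using pow_mult_derived[OF K xy] by blast
  have dz: "inv d \<in> center_of G" "d \<in> carrier G"
    using d derived_subset_center[OF subgroup.subset[OF K]] subgroup.m_inv_closed[OF center_subgroup]
    by (auto simp: center_carrier)
  have "x [^] a \<otimes> y [^] b = x [^] a \<otimes> y [^] a \<otimes> y [^] (b - a)"
    using ab xc by (simp add: m_assoc nat_pow_mult)
  also have "\<dots> = (x \<otimes> y) [^] a \<otimes> inv d \<otimes> y [^] (b - a)"
    using d xc dz by (simp add: m_assoc)
  also have "\<dots> = (x \<otimes> y) [^] a \<otimes> y [^] (b - a) \<otimes> inv d"
    using xc dz by (intro center_mult_middle) auto
  finally show ?thesis using d(1) subgroup.m_inv_closed[OF sgD] by blast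
qed

lemma pow_mult_pow_collect_ge:
  assumes K: "subgroup K G" and xy: "x \<in> K" "y \<in> K" and ab: "b \<le> (a::nat)"
  shows "\<exists>d \<in> derived G K. x [^] a \<otimes> y [^] b = x [^] (a - b) \<otimes> (y \<otimes> x) [^] b \<otimes> d"
proof -
  have sgD: "subgroup (derived G K) G" by (rule derived_is_subgroup[OF subgroup.subset[OF K]])
  have xc: "x \<in> carrier G" "y \<in> carrier G" using subgroup.mem_carrier[OF K] xy by auto
  obtain d where d: "d \<in> derived G K" "(y \<otimes> x) [^] b = y [^] b \<otimes> x [^] b \<otimes> d"
    using pow_mult_derived[OF K xy(2,1)] by blast
  have dz: "inv d \<in> center_of G" "d \<in> carrier G"
    using d derived_subset_center[OF subgroup.subset[OF K]] subgroup.m_inv_closed[OF center_subgroup]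
    by (auto simp: center_carrier)
  define c where "c = commutator G (x [^] b) (y [^] b)"
  have cz: "c \<in> center_of G" "c \<in> derived G K"
    unfolding c_def using xc xy commutator_central subgroup_nat_pow_closed[OF K]
    by (auto intro: commutator_in_derived)
  have "x [^] a \<otimes> y [^] b = x [^] (a - b) \<otimes> (x [^] b \<otimes> y [^] b)"
    using ab xc nat_pow_mult[of x "a - b" b] by (simp flip: m_assoc)
  also have "\<dots> = x [^] (a - b) \<otimes> (c \<otimes> (y [^] b \<otimes> x [^] b))"
    unfolding c_def using xc mult_eq_commutator_mult[of "x [^] b" "y [^] b"] by simp
  also have "\<dots> = x [^] (a - b) \<otimes> (c \<otimes> ((y \<otimes> x) [^] b \<otimes> inv d))"
    using xc d dz by (simp add: m_assoc)
  also have "\<dots> = x [^] (a - b) \<otimes> (y \<otimes> x) [^] b \<otimes> (c \<otimes> inv d)"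
    using xc dz center_commute[OF cz(1), of "(y \<otimes> x) [^] b"] center_carrier[OF cz(1)]
    by (simp flip: m_assoc)
  finally have "x [^] a \<otimes> y [^] b = x [^] (a - b) \<otimes> (y \<otimes> x) [^] b \<otimes> (c \<otimes> inv d)" .
  then show ?thesis
    using cz(2) d(1) subgroup.m_closed[OF sgD] subgroup.m_inv_closed[OF sgD] by blast
qed


lemma derived_from_center:
  "Y \<in> {..<k} \<rightarrow> carrier G \<Longrightarrow> x \<in> derived_from Y i k \<Longrightarrow> x \<in> center_of G"
  unfolding derived_from_def using derived_subset_center[OF subgroup.subset[OF gen_from_subgroup]] by blast

lemma mult_collect_commutator:
  assumes U: "U \<in> carrier G" "s \<in> carrier G" "W \<in> carrier G" "s' \<in> carrier G"
    and c: "c \<in> center_of G" "c' \<in> center_of G"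
  shows "U \<otimes> s \<otimes> c \<otimes> (W \<otimes> s' \<otimes> c') = U \<otimes> W \<otimes> (s \<otimes> s') \<otimes> (commutator G s W \<otimes> c \<otimes> c')"
proof -
  have cc: "c \<in> carrier G" "c' \<in> carrier G" using c center_carrier by auto
  have cz: "commutator G s W \<in> center_of G" using U commutator_central by auto
  then have czc: "commutator G s W \<in> carrier G" by (rule center_carrier)
  have "U \<otimes> s \<otimes> c \<otimes> (W \<otimes> s' \<otimes> c') = U \<otimes> s \<otimes> (W \<otimes> s' \<otimes> c') \<otimes> c"
    using U cc by (intro center_mult_middle c) auto
  also have "\<dots> = U \<otimes> (s \<otimes> W) \<otimes> s' \<otimes> (c' \<otimes> c)" using U cc by (simp add: m_assoc)
  also have "\<dots> = U \<otimes> (commutator G s W \<otimes> (W \<otimes> s)) \<otimes> s' \<otimes> (c' \<otimes> c)"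
    using U by (simp add: mult_eq_commutator_mult[symmetric])
  also have "\<dots> = U \<otimes> (W \<otimes> s) \<otimes> commutator G s W \<otimes> s' \<otimes> (c' \<otimes> c)"
    using U czc center_commute[OF cz, of "W \<otimes> s"] by (simp add: m_assoc)
  also have "\<dots> = U \<otimes> (W \<otimes> s) \<otimes> s' \<otimes> commutator G s W \<otimes> (c' \<otimes> c)"
    using U center_mult_middle[OF cz, of "U \<otimes> (W \<otimes> s)" s'] by simp
  also have "\<dots> = U \<otimes> W \<otimes> (s \<otimes> s') \<otimes> (commutator G s W \<otimes> (c \<otimes> c'))"
    using U cc czc center_commute[OF c(1) cc(2)] by (simp add: m_assoc)
  finally show ?thesis using U cc czc by (simp add: m_assoc)
qed

end

section \<open>Nielsen moves in finite p-groups of class two\<close>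

lemma power_set_P_mult_prime:
  assumes "t \<in> power_set_P p" "t \<noteq> 0" shows "p * t \<in> power_set_P p"
proof -
  have "\<exists>n. t = p ^ n" using assms by (auto simp: power_set_P_def intro: exI[of _ 0])
  then obtain n where "t = p ^ n" ..
  then show ?thesis by (auto simp: power_set_P_def intro!: exI[of _ "Suc n"])
qed

lemma coprime_mult_power_set_P:
  assumes p: "Factorial_Ring.prime (p::nat)"
  shows "\<exists>r t. coprime r p \<and> t \<in> power_set_P p \<and> a = r * t"
proof (induction a rule: less_induct)
  case (less a)
  consider "a = 0" | "a \<noteq> 0" "\<not> p dvd a" | a' where "a \<noteq> 0" "a = p * a'" by blast
  then show ?case
  proof cases
    case 1
    then show ?thesis by (intro exI[of _ 1] exI[of _ 0]) (simp add: power_set_P_def)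
  next
    case 2
    then have "coprime a p" using prime_imp_coprime[OF p] by (simp add: coprime_commute)
    then show ?thesis by (intro exI[of _ a] exI[of _ 1]) (auto simp: power_set_P_def)
  next
    case 3
    then have "a' < a" using prime_gt_1_nat[OF p] by simp
    then obtain r t where rt: "coprime r p" "t \<in> power_set_P p" "a' = r * t" using less by blast
    then have "p * t \<in> power_set_P p" using 3 by (intro power_set_P_mult_prime) auto
    then show ?thesis using rt 3 by (intro exI[of _ r] exI[of _ "p * t"]) auto
  qed
qed

locale class2_p_group = class2_group +
  fixes p e :: nat
  assumes prime_p: "Factorial_Ring.prime p"
    and exponent: "x \<in> carrier G \<Longrightarrow> x [^] (p ^ e) = \<one>"
begin

lemma inv_eq_nat_pow:
  assumes x: "x \<in> carrier G" shows "inv x = x [^] (p ^ e - 1)"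
proof -
  have "p ^ e = Suc (p ^ e - 1)" using prime_gt_0_nat[OF prime_p] by simp
  then have "x [^] (p ^ e - 1) \<otimes> x = \<one>" using x exponent by (metis nat_pow_Suc)
  then show ?thesis using x by (intro inv_equality) auto
qed

lemma nat_pow_coprime_generates:
  assumes x: "x \<in> carrier G" and r: "coprime r p"
  shows "\<exists>m. x = (x [^] r) [^] (m::nat)"
proof -
  have "r \<noteq> 0" using r prime_p by (metis coprime_0_left_iff not_prime_unit)
  then obtain m q where "r * m = p ^ e * q + gcd r (p ^ e)" using bezout_nat by blast
  moreover have "gcd r (p ^ e) = 1" using r by simp
  ultimately have "(x [^] r) [^] m = (x [^] (p ^ e)) [^] q \<otimes> x"
    using x by (simp add: nat_pow_pow nat_pow_mult[symmetric] del: nat_pow_Suc)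
  also have "\<dots> = x" using x exponent by simp
  finally show ?thesis by metis
qed

text \<open>The entries below i0 are frozen.  The power move is invertible because the exponent
  of G is a power of p.\<close>
inductive nielsen_step :: "nat \<Rightarrow> nat \<Rightarrow> (nat \<Rightarrow> 'a) \<Rightarrow> (nat \<Rightarrow> 'a) \<Rightarrow> bool" for i0 k where
  mult: "\<lbrakk>i0 \<le> i; i < k; i0 \<le> j; j < k; i \<noteq> j\<rbrakk> \<Longrightarrow> nielsen_step i0 k Y (Y(i := Y i \<otimes> Y j))"
| swap: "\<lbrakk>i0 \<le> i; i < k; i0 \<le> j; j < k\<rbrakk> \<Longrightarrow> nielsen_step i0 k Y (Y(i := Y j, j := Y i))"
| power: "\<lbrakk>i0 \<le> i; i < k; coprime r p\<rbrakk> \<Longrightarrow> nielsen_step i0 k Y (Y(i := Y i [^] r))"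

abbreviation nielsen_reach :: "nat \<Rightarrow> nat \<Rightarrow> (nat \<Rightarrow> 'a) \<Rightarrow> (nat \<Rightarrow> 'a) \<Rightarrow> bool" where
  "nielsen_reach i0 k \<equiv> (nielsen_step i0 k)\<^sup>*\<^sup>*"

lemma nielsen_step_funcset:
  "nielsen_step i0 k Y Y' \<Longrightarrow> Y \<in> {..<k} \<rightarrow> carrier G \<Longrightarrow> Y' \<in> {..<k} \<rightarrow> carrier G"
  by (induction rule: nielsen_step.induct) (auto simp: Pi_iff)

lemma nielsen_step_fixes: "nielsen_step i0 k Y Y' \<Longrightarrow> i < i0 \<Longrightarrow> Y' i = Y i"
  by (induction rule: nielsen_step.induct) auto

lemma nielsen_step_mono: "nielsen_step i0 k Y Y' \<Longrightarrow> i1 \<le> i0 \<Longrightarrow> nielsen_step i1 k Y Y'"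
  by (induction rule: nielsen_step.induct) (auto intro: nielsen_step.intros)

lemma nielsen_step_gen_from:
  assumes step: "nielsen_step i0 k Y Y'" and Y: "Y \<in> {..<k} \<rightarrow> carrier G" and i: "i \<le> i0"
  shows "gen_from Y' i k = gen_from Y i k"
  using step
proof cases
  case (mult a b)
  have Y': "Y' \<in> {..<k} \<rightarrow> carrier G" using nielsen_step_funcset[OF step Y] .
  note sg = gen_from_subgroup[OF Y, of i] gen_from_subgroup[OF Y', of i]
  have "Y a \<in> carrier G" "Y b \<in> carrier G" using mult Y by auto
  then have "Y a = Y' a \<otimes> inv (Y' b)" using mult by (simp add: m_assoc)
  moreover have "Y' a \<otimes> inv (Y' b) \<in> gen_from Y' i k"
    using mult i by (intro subgroup.m_closed[OF sg(2)] subgroup.m_inv_closed[OF sg(2)] gen_from_incl) auto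
  ultimately have Ya: "Y a \<in> gen_from Y' i k" by simp
  have "Y a \<otimes> Y b \<in> gen_from Y i k"
    using mult i by (intro subgroup.m_closed[OF sg(1)] gen_from_incl) auto
  then have "Y' l \<in> gen_from Y i k" if "i \<le> l" "l < k" for l
    using that mult gen_from_incl[of i l k Y] by (cases "l = a") auto
  moreover have "Y l \<in> gen_from Y' i k" if "i \<le> l" "l < k" for l
    using that Ya mult gen_from_incl[of i l k Y'] by (cases "l = a") auto
  ultimately show ?thesis by (rule gen_from_eqI[OF Y Y'])
next
  case (swap a b)
  have "Y' l \<in> {Y a, Y b, Y l}" "Y l \<in> {Y' a, Y' b, Y' l}" for l
    using swap(1) by auto
  moreover have "{Z a, Z b, Z l} \<subseteq> gen_from Z i k" if "i \<le> l" "l < k" for Z l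
    using that swap(2-5) i by (auto intro: gen_from_incl)
  ultimately show ?thesis using Y nielsen_step_funcset[OF step Y]
    by (intro gen_from_eqI) blast+
next
  case (power a r)
  have Y': "Y' \<in> {..<k} \<rightarrow> carrier G" using nielsen_step_funcset[OF step Y] .
  obtain m where "Y a = (Y' a) [^] (m::nat)"
    using nat_pow_coprime_generates[of "Y a" r] power Y by auto
  moreover have "(Y' a) [^] m \<in> gen_from Y' i k"
    using power i by (intro subgroup_nat_pow_closed[OF gen_from_subgroup[OF Y']] gen_from_incl) auto
  ultimately have Ya: "Y a \<in> gen_from Y' i k" by simp
  have "Y a [^] r \<in> gen_from Y i k"
    using power i by (intro subgroup_nat_pow_closed[OF gen_from_subgroup[OF Y]] gen_from_incl) auto
  then have "Y' l \<in> gen_from Y i k" if "i \<le> l" "l < k" for l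
    using that power gen_from_incl[of i l k Y] by (cases "l = a") auto
  moreover have "Y l \<in> gen_from Y' i k" if "i \<le> l" "l < k" for l
    using that Ya power gen_from_incl[of i l k Y'] by (cases "l = a") auto
  ultimately show ?thesis by (rule gen_from_eqI[OF Y Y'])
qed

lemma nielsen_reach_invariants:
  assumes "nielsen_reach i0 k Y Y'" "Y \<in> {..<k} \<rightarrow> carrier G"
  shows "Y' \<in> {..<k} \<rightarrow> carrier G \<and> (\<forall>i<i0. Y' i = Y i) \<and> (\<forall>i\<le>i0. gen_from Y' i k = gen_from Y i k)"
  using assms
proof (induction rule: rtranclp_induct)
  case (step Y1 Y2)
  then have Y1: "Y1 \<in> {..<k} \<rightarrow> carrier G" by blast
  show ?case
    using step nielsen_step_funcset[OF step.hyps(2) Y1] nielsen_step_fixes[OF step.hyps(2)]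
      nielsen_step_gen_from[OF step.hyps(2) Y1] by auto
qed simp

lemma nielsen_reach_funcset:
  "nielsen_reach i0 k Y Y' \<Longrightarrow> Y \<in> {..<k} \<rightarrow> carrier G \<Longrightarrow> Y' \<in> {..<k} \<rightarrow> carrier G"
  using nielsen_reach_invariants by blast

lemma nielsen_reach_fixes:
  "nielsen_reach i0 k Y Y' \<Longrightarrow> Y \<in> {..<k} \<rightarrow> carrier G \<Longrightarrow> i < i0 \<Longrightarrow> Y' i = Y i"
  using nielsen_reach_invariants by blast

lemma nielsen_reach_gen_from:
  "nielsen_reach i0 k Y Y' \<Longrightarrow> Y \<in> {..<k} \<rightarrow> carrier G \<Longrightarrow> i \<le> i0 \<Longrightarrow> gen_from Y' i k = gen_from Y i k"
  using nielsen_reach_invariants by blast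

lemma nielsen_reach_derived_from:
  "nielsen_reach i0 k Y Y' \<Longrightarrow> Y \<in> {..<k} \<rightarrow> carrier G \<Longrightarrow> i \<le> i0 \<Longrightarrow>
   derived_from Y' i k = derived_from Y i k"
  by (simp add: derived_from_def nielsen_reach_gen_from)

lemma nielsen_reach_mono: "nielsen_reach i0 k Y Y' \<Longrightarrow> i1 \<le> i0 \<Longrightarrow> nielsen_reach i1 k Y Y'"
  by (induction rule: rtranclp_induct) (auto intro: rtranclp.rtrancl_into_rtrancl nielsen_step_mono)

lemma gen_from_decomp_mult:
  assumes Y: "Y \<in> {..<k} \<rightarrow> carrier G" and i: "i < k"
    and s: "s \<in> gen_from Y (Suc i) k" "s' \<in> gen_from Y (Suc i) k"
    and c: "c \<in> derived_from Y i k" "c' \<in> derived_from Y i k"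
  shows "\<exists>c'' \<in> derived_from Y i k.
    Y i [^] (a::nat) \<otimes> s \<otimes> c \<otimes> (Y i [^] (b::nat) \<otimes> s' \<otimes> c') = Y i [^] (a + b) \<otimes> (s \<otimes> s') \<otimes> c''"
proof -
  have x: "Y i \<in> carrier G" using Y i by auto
  have sc: "s \<in> carrier G" "s' \<in> carrier G" using s gen_from_carrier[OF Y] by auto
  have cz: "c \<in> center_of G" "c' \<in> center_of G" using c derived_from_center[OF Y] by auto
  have "s \<in> gen_from Y i k" using s gen_from_mono[of i "Suc i" Y k] by auto
  moreover have "Y i [^] b \<in> gen_from Y i k"
    using subgroup_nat_pow_closed[OF gen_from_subgroup[OF Y]] gen_from_incl i by auto
  ultimately have "commutator G s (Y i [^] b) \<otimes> c \<otimes> c' \<in> derived_from Y i k"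
    using c commutator_in_derived_from subgroup.m_closed[OF derived_from_subgroup[OF Y]] by blast
  moreover have "Y i [^] a \<otimes> s \<otimes> c \<otimes> (Y i [^] b \<otimes> s' \<otimes> c') =
      Y i [^] (a + b) \<otimes> (s \<otimes> s') \<otimes> (commutator G s (Y i [^] b) \<otimes> c \<otimes> c')"
    using x sc cz by (simp add: mult_collect_commutator nat_pow_mult)
  ultimately show ?thesis by blast
qed

lemma gen_from_decomp:
  assumes Y: "Y \<in> {..<k} \<rightarrow> carrier G" and i: "i < k" and v: "v \<in> gen_from Y i k"
  shows "\<exists>a s c. s \<in> gen_from Y (Suc i) k \<and> c \<in> derived_from Y i k \<and> v = Y i [^] (a::nat) \<otimes> s \<otimes> c"
proof -
  note sgS = gen_from_subgroup[OF Y, of "Suc i"] and sgD = derived_from_subgroup[OF Y, of i]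
  have x: "Y i \<in> carrier G" using Y i by auto
  have gen: "Y j \<in> gen_from Y (Suc i) k" if "i \<le> j" "j < k" "j \<noteq> i" for j
    using that by (intro gen_from_incl) auto
  from v show ?thesis unfolding gen_from_def[of Y i k]
  proof induct
    case one
    show ?case using subgroup.one_closed[OF sgS] subgroup.one_closed[OF sgD]
      by (intro exI[of _ 0] exI[of _ \<one>]) auto
  next
    case (incl h)
    then obtain j where j: "i \<le> j" "j < k" "h = Y j" by auto
    show ?case
    proof (cases "j = i")
      case True
      then show ?thesis using subgroup.one_closed[OF sgS] subgroup.one_closed[OF sgD] j x
        by (intro exI[of _ 1] exI[of _ \<one>]) auto
    next
      case False
      have "h = Y i [^] (0::nat) \<otimes> Y j \<otimes> \<one>" using j funcset_mem[OF Y, of j] by simp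
      then show ?thesis using subgroup.one_closed[OF sgD] gen[OF j(1,2) False] by blast
    qed
  next
    case (inv h)
    then obtain j where j: "i \<le> j" "j < k" "h = Y j" by auto
    show ?case
    proof (cases "j = i")
      case True
      then show ?thesis using subgroup.one_closed[OF sgS] subgroup.one_closed[OF sgD] j x inv_eq_nat_pow
        by (intro exI[of _ "p ^ e - 1"] exI[of _ \<one>]) auto
    next
      case False
      have "inv h = Y i [^] (0::nat) \<otimes> inv (Y j) \<otimes> \<one>" using j funcset_mem[OF Y, of j] by simp
      then show ?thesis
        using subgroup.one_closed[OF sgD] subgroup.m_inv_closed[OF sgS gen[OF j(1,2) False]] by blast
    qed
  next
    case (eng h1 h2)
    from eng(2) obtain a s c where A: "s \<in> gen_from Y (Suc i) k" "c \<in> derived_from Y i k"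
      "h1 = Y i [^] (a::nat) \<otimes> s \<otimes> c" by blast
    from eng(4) obtain b s' c' where B: "s' \<in> gen_from Y (Suc i) k" "c' \<in> derived_from Y i k"
      "h2 = Y i [^] (b::nat) \<otimes> s' \<otimes> c'" by blast
    have "s \<otimes> s' \<in> gen_from Y (Suc i) k" using A B subgroup.m_closed[OF sgS] by blast
    then show ?case using gen_from_decomp_mult[OF Y i A(1) B(1) A(2) B(2), of a b] A(3) B(3) by blast
  qed
qed

lemma commutator_decomp:
  assumes Y: "Y \<in> {..<k} \<rightarrow> carrier G" and i: "i < k"
    and h: "h1 \<in> gen_from Y i k" "h2 \<in> gen_from Y i k"
  shows "\<exists>v z. v \<in> gen_from Y (Suc i) k \<and> z \<in> derived_from Y (Suc i) k \<and>
    commutator G h1 h2 = commutator G (Y i) v \<otimes> z"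
proof -
  note sgS = gen_from_subgroup[OF Y, of "Suc i"]
  have x: "Y i \<in> carrier G" using Y i by auto
  from gen_from_decomp[OF Y i h(1)] obtain a s c where A: "s \<in> gen_from Y (Suc i) k"
    "c \<in> derived_from Y i k" "h1 = Y i [^] (a::nat) \<otimes> s \<otimes> c" by blast
  from gen_from_decomp[OF Y i h(2)] obtain b s' c' where B: "s' \<in> gen_from Y (Suc i) k"
    "c' \<in> derived_from Y i k" "h2 = Y i [^] (b::nat) \<otimes> s' \<otimes> c'" by blast
  have sc: "s \<in> carrier G" "s' \<in> carrier G" using A B gen_from_carrier[OF Y] by auto
  have cz: "c \<in> center_of G" "c' \<in> center_of G" using A B derived_from_center[OF Y] by auto
  have "commutator G h1 h2 = commutator G (Y i [^] a \<otimes> s) (Y i [^] b \<otimes> s' \<otimes> c')"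
    unfolding A(3) B(3) using x sc cz center_carrier by (intro commutator_mult_center_left) auto
  also have "\<dots> = commutator G (Y i [^] a \<otimes> s) (Y i [^] b \<otimes> s')"
    using x sc cz center_carrier by (intro commutator_mult_center_right) auto
  also have "\<dots> = commutator G (Y i [^] a) (Y i [^] b) \<otimes> commutator G s (Y i [^] b) \<otimes>
      (commutator G (Y i [^] a) s' \<otimes> commutator G s s')"
    using x sc by (simp add: commutator_mult_left commutator_mult_right)
  also have "commutator G (Y i [^] a) (Y i [^] b) = \<one>"
    using x by (simp add: commutator_pow_left commutator_pow_right)
  also have "commutator G (Y i [^] a) s' = commutator G (Y i) (s' [^] a)"
    using x sc by (simp add: commutator_pow_left commutator_pow_right)
  also have "commutator G s (Y i [^] b) = commutator G (Y i) (inv (s [^] b))"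
  proof -
    have "commutator G s (Y i [^] b) = inv (commutator G (Y i [^] b) s)"
      using x sc by (simp add: inv_commutator)
    also have "\<dots> = inv (commutator G (Y i) s [^] b)"
      using x sc by (simp add: commutator_pow_left)
    also have "\<dots> = commutator G (Y i) (inv (s [^] b))"
      using x sc by (simp add: commutator_inv_right commutator_pow_right)
    finally show ?thesis .
  qed
  finally have "commutator G h1 h2 = commutator G (Y i) (inv (s [^] b) \<otimes> s' [^] a) \<otimes> commutator G s s'"
    using x sc by (simp add: commutator_mult_right m_assoc)
  moreover have "inv (s [^] b) \<otimes> s' [^] a \<in> gen_from Y (Suc i) k"
    using A B by (intro subgroup.m_closed[OF sgS] subgroup.m_inv_closed[OF sgS] subgroup_nat_pow_closed[OF sgS])
  moreover have "commutator G s s' \<in> derived_from Y (Suc i) k"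
    using A B commutator_in_derived_from by auto
  ultimately show ?thesis by blast
qed

lemma derived_from_decomp:
  assumes Y: "Y \<in> {..<k} \<rightarrow> carrier G" and i: "i < k" and z: "z \<in> derived_from Y i k"
  shows "\<exists>v z'. v \<in> gen_from Y (Suc i) k \<and> z' \<in> derived_from Y (Suc i) k \<and>
    z = commutator G (Y i) v \<otimes> z'"
proof -
  note sgS = gen_from_subgroup[OF Y, of "Suc i"] and sgD = derived_from_subgroup[OF Y, of "Suc i"]
  have x: "Y i \<in> carrier G" using Y i by auto
  from z show ?thesis unfolding derived_from_def[of Y i k] derived_def
  proof induct
    case one
    show ?case using subgroup.one_closed[OF sgS] subgroup.one_closed[OF sgD] x
      by (intro exI[of _ \<one>]) auto
  next
    case (incl h)
    then obtain h1 h2 where "h1 \<in> gen_from Y i k" "h2 \<in> gen_from Y i k" "h = commutator G h1 h2"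
      by (auto simp: commutator_def)
    then show ?case using commutator_decomp[OF Y i] by blast
  next
    case (inv h)
    then obtain h1 h2 where hh: "h1 \<in> gen_from Y i k" "h2 \<in> gen_from Y i k" "h = commutator G h1 h2"
      by (auto simp: commutator_def)
    then have "inv h = commutator G h2 h1" using gen_from_carrier[OF Y] by (simp add: inv_commutator)
    then show ?case using commutator_decomp[OF Y i hh(2,1)] by metis
  next
    case (eng h1 h2)
    from eng(2) obtain v z where A: "v \<in> gen_from Y (Suc i) k" "z \<in> derived_from Y (Suc i) k"
      "h1 = commutator G (Y i) v \<otimes> z" by blast
    from eng(4) obtain v' z' where B: "v' \<in> gen_from Y (Suc i) k" "z' \<in> derived_from Y (Suc i) k"
      "h2 = commutator G (Y i) v' \<otimes> z'" by blast
    have vc: "v \<in> carrier G" "v' \<in> carrier G" using A B gen_from_carrier[OF Y] by auto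
    have zz: "z \<in> center_of G" "z' \<in> carrier G" using A B derived_from_center[OF Y] center_carrier by auto
    have "h1 \<otimes> h2 = commutator G (Y i) v \<otimes> z \<otimes> commutator G (Y i) v' \<otimes> z'"
      unfolding A B using x vc zz center_carrier by (simp add: m_assoc)
    also have "\<dots> = commutator G (Y i) v \<otimes> commutator G (Y i) v' \<otimes> z \<otimes> z'"
      using x vc zz by (subst center_mult_middle[OF zz(1)]) auto
    also have "\<dots> = commutator G (Y i) (v \<otimes> v') \<otimes> (z \<otimes> z')"
      using x vc zz center_carrier by (simp add: commutator_mult_right m_assoc)
    finally have "h1 \<otimes> h2 = commutator G (Y i) (v \<otimes> v') \<otimes> (z \<otimes> z')" .
    moreover have "v \<otimes> v' \<in> gen_from Y (Suc i) k" using A B by (intro subgroup.m_closed[OF sgS])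
    moreover have "z \<otimes> z' \<in> derived_from Y (Suc i) k" using A B by (intro subgroup.m_closed[OF sgD])
    ultimately show ?case by blast
  qed
qed

text \<open>Euclid's algorithm on the exponents, carried out by Nielsen moves.\<close>
lemma nielsen_merge_powers:
  assumes "Y \<in> {..<k} \<rightarrow> carrier G" "i0 \<le> i" "i < k" "i0 \<le> j" "j < k" "i \<noteq> j"
  shows "\<exists>Y' g d. nielsen_reach i0 k Y Y' \<and> d \<in> derived_from Y i0 k \<and>
    Y i [^] (a::nat) \<otimes> Y j [^] (b::nat) = Y' i [^] (g::nat) \<otimes> d"
  using assms
proof (induction "a + b" arbitrary: a b Y rule: less_induct)
  case less
  note Y = less.prems(1) and ij = less.prems(2-6)
  note sgD = derived_from_subgroup[OF Y, of i0]
  have x: "Y i \<in> carrier G" "Y j \<in> carrier G" using Y ij by auto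
  have xy: "Y i \<in> gen_from Y i0 k" "Y j \<in> gen_from Y i0 k" using ij by (auto intro: gen_from_incl)
  note K = gen_from_subgroup[OF Y, of i0]
  have recurse: "\<exists>Y' g d. nielsen_reach i0 k Y Y' \<and> d \<in> derived_from Y i0 k \<and>
      Y i [^] a \<otimes> Y j [^] b = Y' i [^] (g::nat) \<otimes> d"
    if step: "nielsen_step i0 k Y Y1" and less_ab: "a' + b' < a + b"
      and d1: "d1 \<in> derived_from Y i0 k" and eq: "Y i [^] a \<otimes> Y j [^] b = Y1 i [^] a' \<otimes> Y1 j [^] b' \<otimes> d1"
    for Y1 a' b' d1
  proof -
    have Y1: "Y1 \<in> {..<k} \<rightarrow> carrier G" using nielsen_step_funcset[OF step Y] .
    obtain Y2 g d2 where Y2: "nielsen_reach i0 k Y1 Y2" "d2 \<in> derived_from Y1 i0 k"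
      "Y1 i [^] a' \<otimes> Y1 j [^] b' = Y2 i [^] (g::nat) \<otimes> d2"
      using less.hyps[OF less_ab Y1 ij] by blast
    have d2: "d2 \<in> derived_from Y i0 k"
      using Y2(2) nielsen_reach_derived_from[OF r_into_rtranclp[of "nielsen_step i0 k", OF step] Y, of i0] by simp
    have "Y2 i \<in> carrier G" using nielsen_reach_funcset[OF Y2(1) Y1] ij by auto
    then have "Y i [^] a \<otimes> Y j [^] b = Y2 i [^] g \<otimes> (d2 \<otimes> d1)"
      using eq Y2(3) d1 d2 subgroup.mem_carrier[OF sgD] by (simp add: m_assoc)
    moreover have "d2 \<otimes> d1 \<in> derived_from Y i0 k" using d1 d2 subgroup.m_closed[OF sgD] by blast
    moreover have "nielsen_reach i0 k Y Y2" using step Y2(1) by (rule converse_rtranclp_into_rtranclp)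
    ultimately show ?thesis by blast
  qed
  consider "b = 0" | "a = 0" "b \<noteq> 0" | "a \<noteq> 0" "b \<noteq> 0" "a \<le> b" | "a \<noteq> 0" "b \<noteq> 0" "b < a"
    by linarith
  then show ?case
  proof cases
    case 1
    then show ?thesis using x subgroup.one_closed[OF sgD]
      by (intro exI[of _ Y] exI[of _ a] exI[of _ \<one>]) auto
  next
    case 2
    have "nielsen_step i0 k Y (Y(i := Y j, j := Y i))" using ij by (intro nielsen_step.swap)
    then show ?thesis using 2 x subgroup.one_closed[OF sgD] ij
      by (intro exI[of _ "Y(i := Y j, j := Y i)"] exI[of _ b] exI[of _ \<one>]) auto
  next
    case 3
    obtain d where d: "d \<in> derived_from Y i0 k"
      "Y i [^] a \<otimes> Y j [^] b = (Y i \<otimes> Y j) [^] a \<otimes> Y j [^] (b - a) \<otimes> d"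
      using pow_mult_pow_collect_le[OF K xy 3(3)] unfolding derived_from_def by blast
    show ?thesis
    proof (rule recurse[of _ a "b - a" d])
      show "nielsen_step i0 k Y (Y(i := Y i \<otimes> Y j))" using ij by (rule nielsen_step.mult)
      show "Y i [^] a \<otimes> Y j [^] b =
        (Y(i := Y i \<otimes> Y j)) i [^] a \<otimes> (Y(i := Y i \<otimes> Y j)) j [^] (b - a) \<otimes> d"
        using d(2) ij by simp
    qed (use 3 d in auto)
  next
    case 4
    obtain d where d: "d \<in> derived_from Y i0 k"
      "Y i [^] a \<otimes> Y j [^] b = Y i [^] (a - b) \<otimes> (Y j \<otimes> Y i) [^] b \<otimes> d"
      using pow_mult_pow_collect_ge[OF K xy, of b a] 4(3) unfolding derived_from_def by auto
    show ?thesis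
    proof (rule recurse[of _ "a - b" b d])
      show "nielsen_step i0 k Y (Y(j := Y j \<otimes> Y i))" using ij by (intro nielsen_step.mult) auto
      show "Y i [^] a \<otimes> Y j [^] b =
        (Y(j := Y j \<otimes> Y i)) i [^] (a - b) \<otimes> (Y(j := Y j \<otimes> Y i)) j [^] b \<otimes> d"
        using d(2) ij by simp
    qed (use 4 d in auto)
  qed
qed

lemma nielsen_power_set_P:
  assumes Y: "Y \<in> {..<k} \<rightarrow> carrier G" and i: "i0 \<le> i" "i < k"
  shows "\<exists>Y' t. nielsen_reach i0 k Y Y' \<and> t \<in> power_set_P p \<and> Y i [^] (g::nat) = Y' i [^] t"
proof -
  obtain r t where rt: "coprime r p" "t \<in> power_set_P p" "g = r * t"
    using coprime_mult_power_set_P[OF prime_p] by blast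
  have "nielsen_step i0 k Y (Y(i := Y i [^] r))" using i rt(1) by (rule nielsen_step.power)
  moreover have "Y i [^] g = (Y(i := Y i [^] r)) i [^] t"
    using funcset_mem[OF Y] i rt by (simp add: nat_pow_pow)
  ultimately show ?thesis using rt(2) by blast
qed

lemma nielsen_leading_power:
  "Y \<in> {..<k} \<rightarrow> carrier G \<Longrightarrow> i \<le> k \<Longrightarrow> v \<in> gen_from Y i k \<Longrightarrow>
   \<exists>Y' g c. nielsen_reach i k Y Y' \<and> c \<in> derived_from Y i k \<and> v = Y' i [^] (g::nat) \<otimes> c"
proof (induction "k - i" arbitrary: i Y v)
  case 0
  then have "v = \<one>" "\<one> \<in> derived_from Y i k" using gen_from_empty derived_from_empty by auto
  then show ?case by (intro exI[of _ Y] exI[of _ "0::nat"] exI[of _ \<one>]) auto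
next
  case (Suc n)
  note Y = Suc.prems(1)
  have i: "i < k" using Suc by simp
  have x: "Y i \<in> carrier G" using Y i by auto
  note sgD = derived_from_subgroup[OF Y, of i]
  obtain a s c where A: "s \<in> gen_from Y (Suc i) k" "c \<in> derived_from Y i k" "v = Y i [^] (a::nat) \<otimes> s \<otimes> c"
    using gen_from_decomp[OF Y i Suc.prems(3)] by blast
  have c: "c \<in> carrier G" using A(2) subgroup.mem_carrier[OF sgD] by auto
  show ?case
  proof (cases "Suc i = k")
    case True
    then have "v = Y i [^] a \<otimes> c" using A x c gen_from_empty by simp
    then show ?thesis using A(2) by blast
  next
    case False
    then have i1: "Suc i \<le> k" "n = k - Suc i" using Suc i by auto
    obtain Y1 t1 c1 where Y1: "nielsen_reach (Suc i) k Y Y1" "c1 \<in> derived_from Y (Suc i) k"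
      "s = Y1 (Suc i) [^] (t1::nat) \<otimes> c1"
      using Suc.hyps(1)[OF i1(2) Y i1(1) A(1)] by blast
    have r1: "nielsen_reach i k Y Y1" using nielsen_reach_mono[OF Y1(1)] by simp
    have Y1c: "Y1 \<in> {..<k} \<rightarrow> carrier G" using nielsen_reach_funcset[OF Y1(1) Y] .
    have c1: "c1 \<in> derived_from Y i k" "c1 \<in> carrier G"
      using Y1(2) derived_from_mono[of i "Suc i" Y k] subgroup.mem_carrier[OF sgD] by auto
    obtain Y2 g d where Y2: "nielsen_reach i k Y1 Y2" "d \<in> derived_from Y1 i k"
      "Y1 i [^] a \<otimes> Y1 (Suc i) [^] t1 = Y2 i [^] (g::nat) \<otimes> d"
      using nielsen_merge_powers[OF Y1c, of i i "Suc i" a t1] i False by auto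
    have d: "d \<in> derived_from Y i k" using Y2(2) nielsen_reach_derived_from[OF r1 Y, of i] by simp
    have "Y1 i = Y i" "Y1 (Suc i) \<in> carrier G" using nielsen_reach_fixes[OF Y1(1) Y] Y1c False i1 by auto
    then have "v = (Y1 i [^] a \<otimes> Y1 (Suc i) [^] t1) \<otimes> (c1 \<otimes> c)"
      using A(3) Y1(3) x c1 c by (simp add: m_assoc)
    also have "\<dots> = Y2 i [^] g \<otimes> (d \<otimes> (c1 \<otimes> c))"
      using Y2(3) funcset_mem[OF nielsen_reach_funcset[OF Y2(1) Y1c]] i c1 c d subgroup.mem_carrier[OF sgD]
      by (simp add: m_assoc)
    finally have "v = Y2 i [^] g \<otimes> (d \<otimes> (c1 \<otimes> c))" .
    moreover have "d \<otimes> (c1 \<otimes> c) \<in> derived_from Y i k"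
      using d c1 A(2) subgroup.m_closed[OF sgD] by blast
    moreover have "nielsen_reach i k Y Y2" using r1 Y2(1) by simp
    ultimately show ?thesis by blast
  qed
qed

lemma nielsen_leading_power_set_P:
  assumes Y: "Y \<in> {..<k} \<rightarrow> carrier G" and i: "i < k" and v: "v \<in> gen_from Y i k"
  shows "\<exists>Y' t c. nielsen_reach i k Y Y' \<and> t \<in> power_set_P p \<and> c \<in> derived_from Y i k \<and>
    v = Y' i [^] t \<otimes> c"
proof -
  obtain Y1 g c where Y1: "nielsen_reach i k Y Y1" "c \<in> derived_from Y i k" "v = Y1 i [^] (g::nat) \<otimes> c"
    using nielsen_leading_power[OF Y _ v] i by auto
  obtain Y2 t where Y2: "nielsen_reach i k Y1 Y2" "t \<in> power_set_P p" "Y1 i [^] g = Y2 i [^] t"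
    using nielsen_power_set_P[OF nielsen_reach_funcset[OF Y1(1) Y], of i i g] i by auto
  have "nielsen_reach i k Y Y2" using Y1(1) Y2(1) by (rule rtranclp_trans)
  moreover have "v = Y2 i [^] t \<otimes> c" using Y1(3) Y2(3) by simp
  ultimately show ?thesis using Y1(2) Y2(2) by blast
qed

lemma nielsen_comm_chain:
  "Y \<in> {..<k} \<rightarrow> carrier G \<Longrightarrow> i < k \<Longrightarrow> v \<in> gen_from Y (Suc i) k \<Longrightarrow> z \<in> derived_from Y (Suc i) k \<Longrightarrow>
   \<exists>Y' t. nielsen_reach (Suc i) k Y Y' \<and> (\<forall>j. Suc i \<le> j \<and> j < k \<longrightarrow> t j \<in> power_set_P p) \<and>
     commutator G (Y i) v \<otimes> z = comm_chain G Y' t (Suc i) k"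
proof (induction "k - Suc i" arbitrary: i Y v z)
  case 0
  then have "Suc i = k" by simp
  then have "v = \<one>" "z = \<one>" using 0 gen_from_empty derived_from_empty by auto
  moreover have "Y i \<in> carrier G" using 0 by auto
  ultimately show ?case using \<open>Suc i = k\<close> by (intro exI[of _ Y] exI[of _ "\<lambda>_. 0"]) (auto simp: comm_chain_empty)
next
  case (Suc n)
  note Y = Suc.prems(1)
  have i: "Suc i < k" "n = k - Suc (Suc i)" using Suc by auto
  have x: "Y i \<in> carrier G" using Y Suc by auto
  obtain Y1 t1 c where Y1: "nielsen_reach (Suc i) k Y Y1" "t1 \<in> power_set_P p"
    "c \<in> derived_from Y (Suc i) k" "v = Y1 (Suc i) [^] t1 \<otimes> c"
    using nielsen_leading_power_set_P[OF Y i(1) Suc.prems(3)] by blast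
  have Y1c: "Y1 \<in> {..<k} \<rightarrow> carrier G" using nielsen_reach_funcset[OF Y1(1) Y] .
  have y1i: "Y1 i = Y i" using nielsen_reach_fixes[OF Y1(1) Y] by simp
  have y: "Y1 (Suc i) \<in> carrier G" using Y1c i by auto
  have v: "commutator G (Y i) v = commutator G (Y i) (Y1 (Suc i)) [^] t1"
    unfolding Y1(4) using x y derived_from_center[OF Y Y1(3)]
    by (simp add: commutator_mult_center_right commutator_pow_right)
  have zD: "z \<in> derived_from Y1 (Suc i) k" using Suc.prems(4) nielsen_reach_derived_from[OF Y1(1) Y] by simp
  obtain v' z' where R: "v' \<in> gen_from Y1 (Suc (Suc i)) k" "z' \<in> derived_from Y1 (Suc (Suc i)) k"
    "z = commutator G (Y1 (Suc i)) v' \<otimes> z'"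
    using derived_from_decomp[OF Y1c i(1) zD] by blast
  obtain Y2 t2 where Y2: "nielsen_reach (Suc (Suc i)) k Y1 Y2"
    "\<forall>j. Suc (Suc i) \<le> j \<and> j < k \<longrightarrow> t2 j \<in> power_set_P p"
    "commutator G (Y1 (Suc i)) v' \<otimes> z' = comm_chain G Y2 t2 (Suc (Suc i)) k"
    using Suc.hyps(1)[OF i(2) Y1c i(1) R(1,2)] by blast
  have y2: "Y2 i = Y i" "Y2 (Suc i) = Y1 (Suc i)" using nielsen_reach_fixes[OF Y2(1) Y1c] y1i by auto
  define t where "t = t2(Suc i := t1)"
  have "comm_chain G Y2 t (Suc i) k =
      commutator G (Y i) (Y1 (Suc i)) [^] t1 \<otimes> comm_chain G Y2 t2 (Suc (Suc i)) k"
    using comm_chain_Suc[OF i(1), of G Y2 t] comm_chain_cong[of "Suc (Suc i)" k t t2 Y2 Y2 G] y2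
    by (simp add: t_def)
  then have "commutator G (Y i) v \<otimes> z = comm_chain G Y2 t (Suc i) k"
    using v R(3) Y2(3) by simp
  moreover have "nielsen_reach (Suc i) k Y Y2"
    using Y1(1) nielsen_reach_mono[OF Y2(1)] by (meson le_SucI order_refl rtranclp_trans)
  moreover have "\<forall>j. Suc i \<le> j \<and> j < k \<longrightarrow> t j \<in> power_set_P p"
    using Y2(2) Y1(2) by (auto simp: t_def Suc_le_eq)
  ultimately show ?case by blast
qed

theorem nielsen_normal_form:
  assumes Y: "Y \<in> {..<k} \<rightarrow> carrier G" and k: "0 < k" and w: "w \<in> gen_from Y 0 k"
  shows "\<exists>Y' t. nielsen_reach 0 k Y Y' \<and> (\<forall>i<k. t i \<in> power_set_P p) \<and>
    w = Y' 0 [^] t 0 \<otimes> comm_chain G Y' t 1 k"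
proof -
  obtain Y1 t0 c where Y1: "nielsen_reach 0 k Y Y1" "t0 \<in> power_set_P p" "c \<in> derived_from Y 0 k"
    "w = Y1 0 [^] t0 \<otimes> c"
    using nielsen_leading_power_set_P[OF Y k w] by blast
  have Y1c: "Y1 \<in> {..<k} \<rightarrow> carrier G" using nielsen_reach_funcset[OF Y1(1) Y] .
  have "c \<in> derived_from Y1 0 k" using Y1(3) nielsen_reach_derived_from[OF Y1(1) Y] by simp
  then obtain v z where R: "v \<in> gen_from Y1 1 k" "z \<in> derived_from Y1 1 k"
    "c = commutator G (Y1 0) v \<otimes> z"
    using derived_from_decomp[OF Y1c k] by (metis One_nat_def)
  obtain Y2 t where Y2: "nielsen_reach 1 k Y1 Y2" "\<forall>j. 1 \<le> j \<and> j < k \<longrightarrow> t j \<in> power_set_P p"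
    "commutator G (Y1 0) v \<otimes> z = comm_chain G Y2 t 1 k"
    using nielsen_comm_chain[OF Y1c k] R by fastforce
  have y2: "Y2 0 = Y1 0" using nielsen_reach_fixes[OF Y2(1) Y1c] by simp
  define t' where "t' = t(0 := t0)"
  have "comm_chain G Y2 t' 1 k = comm_chain G Y2 t 1 k" by (rule comm_chain_cong) (simp_all add: t'_def)
  then have "w = Y2 0 [^] t' 0 \<otimes> comm_chain G Y2 t' 1 k" using Y1(4) R(3) Y2(3) y2 by (simp add: t'_def)
  moreover have "nielsen_reach 0 k Y Y2" using Y1(1) nielsen_reach_mono[OF Y2(1)] by (meson le0 rtranclp_trans)
  moreover have "\<forall>i<k. t' i \<in> power_set_P p" using Y2(2) Y1(2) by (auto simp: t'_def)
  ultimately show ?thesis by blast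
qed

end

section \<open>The group of word maps\<close>

lemma words_Nil [simp]: "[] \<in> words k"
  by (simp add: words_def)

lemma words_Cons [simp]: "(i, b) # w \<in> words k \<longleftrightarrow> i < k \<and> w \<in> words k"
  by (auto simp: words_def)

lemma words_append [simp]: "u @ v \<in> words k \<longleftrightarrow> u \<in> words k \<and> v \<in> words k"
  by (auto simp: words_def)

lemma words_word_inv [simp]: "u \<in> words k \<Longrightarrow> word_inv u \<in> words k"
  by (auto simp: words_def word_inv_def)

lemma words_concat: "(\<And>u. u \<in> set us \<Longrightarrow> u \<in> words k) \<Longrightarrow> concat us \<in> words k"
  by (induct us) auto

lemma words_word_pow [simp]: "u \<in> words k \<Longrightarrow> word_pow u n \<in> words k"
  unfolding word_pow_def by (rule words_concat) auto

lemma words_gen [simp]: "i < k \<Longrightarrow> gen i \<in> words k"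
  by (simp add: gen_def)

lemma words_word_comm [simp]: "u \<in> words k \<Longrightarrow> v \<in> words k \<Longrightarrow> word_comm u v \<in> words k"
  by (simp add: word_comm_def)

lemma words_normal_word: "k \<ge> 1 \<Longrightarrow> normal_word k t \<in> words k"
  unfolding normal_word_def by (auto intro!: words_concat)

lemma eval_word_Nil [simp]: "eval_word G g [] = \<one>\<^bsub>G\<^esub>"
  by (simp add: eval_word_def)

lemma eval_word_Cons [simp]:
  "eval_word G g ((i, b) # w) = (if b then inv\<^bsub>G\<^esub> (g i) else g i) \<otimes>\<^bsub>G\<^esub> eval_word G g w"
  by (simp add: eval_word_def)

definition subst_word :: "(nat \<Rightarrow> word) \<Rightarrow> word \<Rightarrow> word" where
  "subst_word \<sigma> u = concat (map (\<lambda>(i, b). if b then word_inv (\<sigma> i) else \<sigma> i) u)"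

lemma subst_word_words: "\<forall>i<k. \<sigma> i \<in> words k \<Longrightarrow> u \<in> words k \<Longrightarrow> subst_word \<sigma> u \<in> words k"
  by (induct u) (auto simp: subst_word_def)

locale word_maps = group G for G (structure) + fixes k :: nat
begin

abbreviation W where "W \<equiv> word_map_group G k"

lemma tuples_carrier: "g \<in> tuples G k \<Longrightarrow> i < k \<Longrightarrow> g i \<in> carrier G"
  by (auto simp: tuples_def)

lemma eval_word_closed [simp]: "u \<in> words k \<Longrightarrow> g \<in> tuples G k \<Longrightarrow> eval_word G g u \<in> carrier G"
  by (induct u) (auto simp: tuples_carrier)

lemma eval_word_append:
  "u \<in> words k \<Longrightarrow> v \<in> words k \<Longrightarrow> g \<in> tuples G k \<Longrightarrow>
   eval_word G g (u @ v) = eval_word G g u \<otimes> eval_word G g v"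
  by (induct u) (auto simp: tuples_carrier m_assoc)

lemma eval_word_inv:
  "u \<in> words k \<Longrightarrow> g \<in> tuples G k \<Longrightarrow> eval_word G g (word_inv u) = inv (eval_word G g u)"
proof (induct u)
  case Nil
  then show ?case by (simp add: word_inv_def)
next
  case (Cons a u)
  obtain i b where a: "a = (i, b)" by force
  have "word_inv (a # u) = word_inv u @ [(i, \<not> b)]" by (simp add: word_inv_def a)
  then show ?case using Cons a tuples_carrier[OF Cons(3), of i]
    by (auto simp: eval_word_append inv_mult_group)
qed

lemma word_map_apply: "g \<in> tuples G k \<Longrightarrow> word_map G k u g = eval_word G g u"
  by (simp add: word_map_def)

lemma word_map_eqI:
  "(\<And>g. g \<in> tuples G k \<Longrightarrow> eval_word G g u = eval_word G g v) \<Longrightarrow> word_map G k u = word_map G k v"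
  unfolding word_map_def by (rule restrict_ext)

lemma carrier_word_map_group: "carrier W = word_map G k ` words k"
  by (simp add: word_map_group_def)

lemma mult_word_map_group: "f \<otimes>\<^bsub>W\<^esub> h = (\<lambda>g \<in> tuples G k. f g \<otimes> h g)"
  by (simp add: word_map_group_def)

lemma one_word_map_group: "\<one>\<^bsub>W\<^esub> = (\<lambda>g \<in> tuples G k. \<one>)"
  by (simp add: word_map_group_def)

lemma word_map_append:
  "u \<in> words k \<Longrightarrow> v \<in> words k \<Longrightarrow> word_map G k u \<otimes>\<^bsub>W\<^esub> word_map G k v = word_map G k (u @ v)"
  unfolding mult_word_map_group by (rule ext) (simp add: word_map_def eval_word_append)

lemma word_map_Nil: "\<one>\<^bsub>W\<^esub> = word_map G k []"
  unfolding one_word_map_group by (rule ext) (simp add: word_map_def)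

lemma word_map_word_inv_mult:
  "u \<in> words k \<Longrightarrow> word_map G k (word_inv u) \<otimes>\<^bsub>W\<^esub> word_map G k u = \<one>\<^bsub>W\<^esub>"
  by (simp add: word_map_append word_map_Nil, intro word_map_eqI) (simp add: eval_word_append eval_word_inv)

lemma word_map_group_is_group: "group W"
proof (rule groupI)
  fix x assume "x \<in> carrier W"
  then obtain u where u: "u \<in> words k" "x = word_map G k u" by (auto simp: carrier_word_map_group)
  then show "\<exists>y\<in>carrier W. y \<otimes>\<^bsub>W\<^esub> x = \<one>\<^bsub>W\<^esub>"
    using word_map_word_inv_mult[of u] by (auto simp: carrier_word_map_group)
qed (auto simp: carrier_word_map_group word_map_append word_map_Nil)

sublocale W: group W
  by (rule word_map_group_is_group)

lemma word_map_word_inv: "u \<in> words k \<Longrightarrow> inv\<^bsub>W\<^esub> (word_map G k u) = word_map G k (word_inv u)"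
  using word_map_word_inv_mult by (intro W.inv_equality) (auto simp: carrier_word_map_group)

lemma word_map_word_pow: "u \<in> words k \<Longrightarrow> word_map G k (word_pow u n) = word_map G k u [^]\<^bsub>W\<^esub> n"
proof (induct n)
  case 0
  then show ?case by (simp add: word_pow_def word_map_Nil)
next
  case (Suc n)
  have "word_map G k (word_pow u (Suc n)) = word_map G k (u @ word_pow u n)"
    by (simp add: word_pow_def)
  also have "\<dots> = word_map G k u \<otimes>\<^bsub>W\<^esub> word_map G k (word_pow u n)"
    using Suc(2) by (simp add: word_map_append)
  finally have "word_map G k (word_pow u (Suc n)) = word_map G k u \<otimes>\<^bsub>W\<^esub> word_map G k (word_pow u n)" .
  then show ?case
    using Suc W.nat_pow_Suc2[of "word_map G k u" n] by (simp add: carrier_word_map_group)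
qed

lemma word_map_word_comm:
  "u \<in> words k \<Longrightarrow> v \<in> words k \<Longrightarrow>
   word_map G k (word_comm u v) = commutator W (word_map G k u) (word_map G k v)"
  by (simp add: word_comm_def commutator_def word_map_append word_map_word_inv)

lemma word_map_concat:
  "(\<And>j. j \<in> set js \<Longrightarrow> f j \<in> words k) \<Longrightarrow>
   word_map G k (concat (map f js)) = foldr (\<lambda>j acc. word_map G k (f j) \<otimes>\<^bsub>W\<^esub> acc) js \<one>\<^bsub>W\<^esub>"
proof (induct js)
  case Nil
  then show ?case by (simp add: word_map_Nil)
next
  case (Cons j js)
  then have "f j \<in> words k" "concat (map f js) \<in> words k" by (auto intro!: words_concat)
  then show ?case using Cons by (simp add: word_map_append[symmetric])
qed

lemma word_map_normal_word:
  assumes "k \<ge> 1"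
  shows "word_map G k (normal_word k t) =
    word_map G k (gen 0) [^]\<^bsub>W\<^esub> t 0 \<otimes>\<^bsub>W\<^esub> comm_chain W (\<lambda>i. word_map G k (gen i)) t 1 k"
proof -
  let ?f = "\<lambda>i. word_pow (word_comm (gen (i - 1)) (gen i)) (t i)"
  have f: "?f i \<in> words k" if "i \<in> set [1..<k]" for i
    using that by auto
  have "word_map G k (concat (map ?f [1..<k])) =
      foldr (\<lambda>i acc. word_map G k (?f i) \<otimes>\<^bsub>W\<^esub> acc) [1..<k] \<one>\<^bsub>W\<^esub>"
    by (rule word_map_concat) (rule f)
  also have "\<dots> = comm_chain W (\<lambda>i. word_map G k (gen i)) t 1 k"
    unfolding comm_chain_def by (rule foldr_cong) (auto simp: word_map_word_pow word_map_word_comm)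
  finally have "word_map G k (concat (map ?f [1..<k])) = comm_chain W (\<lambda>i. word_map G k (gen i)) t 1 k" .
  moreover have "concat (map ?f [1..<k]) \<in> words k" using f by (intro words_concat) auto
  ultimately show ?thesis
    using assms by (simp add: normal_word_def word_map_append[symmetric] word_map_word_pow)
qed

lemma word_map_group_eqI:
  "f \<in> carrier W \<Longrightarrow> h \<in> carrier W \<Longrightarrow> (\<And>g. g \<in> tuples G k \<Longrightarrow> f g = h g) \<Longrightarrow> f = h"
  by (auto simp: carrier_word_map_group word_map_def)

lemma word_map_group_apply_closed: "f \<in> carrier W \<Longrightarrow> g \<in> tuples G k \<Longrightarrow> f g \<in> carrier G"
  by (auto simp: carrier_word_map_group word_map_apply)

lemma word_map_group_mult_apply: "g \<in> tuples G k \<Longrightarrow> (f \<otimes>\<^bsub>W\<^esub> h) g = f g \<otimes> h g"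
  by (simp add: mult_word_map_group)

lemma word_map_group_inv_apply:
  assumes f: "f \<in> carrier W" and g: "g \<in> tuples G k" shows "(inv\<^bsub>W\<^esub> f) g = inv (f g)"
proof -
  have "(inv\<^bsub>W\<^esub> f \<otimes>\<^bsub>W\<^esub> f) g = \<one>" using f g by (simp add: one_word_map_group)
  then have "(inv\<^bsub>W\<^esub> f) g \<otimes> f g = \<one>" using g by (simp add: word_map_group_mult_apply)
  then show ?thesis using f g word_map_group_apply_closed by (simp add: inv_equality)
qed

lemma word_map_group_pow_apply:
  "f \<in> carrier W \<Longrightarrow> g \<in> tuples G k \<Longrightarrow> (f [^]\<^bsub>W\<^esub> (n::nat)) g = f g [^] n"
  by (induct n) (simp_all add: word_map_group_mult_apply one_word_map_group)

lemma word_map_group_commutator_apply: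
  "f \<in> carrier W \<Longrightarrow> h \<in> carrier W \<Longrightarrow> g \<in> tuples G k \<Longrightarrow>
   commutator W f h g = commutator G (f g) (h g)"
  by (simp add: commutator_def word_map_group_mult_apply word_map_group_inv_apply)

lemma class2_p_group_word_map_group:
  assumes "class2_group G" "Factorial_Ring.prime p" "card (carrier G) = p ^ n"
  shows "class2_p_group W p n"
proof -
  interpret class2_group G by (rule assms(1))
  have "class2_group W"
  proof
    fix f h assume fh: "f \<in> carrier W" "h \<in> carrier W"
    have "commutator W f h \<otimes>\<^bsub>W\<^esub> l = l \<otimes>\<^bsub>W\<^esub> commutator W f h" if l: "l \<in> carrier W" for l
    proof (rule word_map_group_eqI)
      fix g assume g: "g \<in> tuples G k"
      have "commutator G (f g) (h g) \<in> center_of G"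
        using fh g by (intro commutator_central word_map_group_apply_closed)
      from center_commute[OF this word_map_group_apply_closed[OF l g]]
      show "(commutator W f h \<otimes>\<^bsub>W\<^esub> l) g = (l \<otimes>\<^bsub>W\<^esub> commutator W f h) g"
        using fh g by (simp add: word_map_group_mult_apply word_map_group_commutator_apply)
    qed (use fh l in auto)
    then show "commutator W f h \<in> center_of W" using fh by (simp add: center_of_def)
  qed
  moreover have "f [^]\<^bsub>W\<^esub> p ^ n = \<one>\<^bsub>W\<^esub>" if f: "f \<in> carrier W" for f
  proof (rule word_map_group_eqI)
    fix g assume g: "g \<in> tuples G k"
    have "f g [^] order G = \<one>" using word_map_group_apply_closed[OF f g] by (rule pow_order_eq_1)
    then show "(f [^]\<^bsub>W\<^esub> p ^ n) g = \<one>\<^bsub>W\<^esub> g"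
      using f g assms(3) by (simp add: word_map_group_pow_apply one_word_map_group order_def)
  qed (use f in auto)
  ultimately show ?thesis using assms(2) by (simp add: class2_p_group_def class2_p_group_axioms_def)
qed

lemma finite_word_map_group:
  assumes "finite (carrier G)" shows "finite (carrier W)"
proof (rule finite_subset)
  show "carrier W \<subseteq> PiE (tuples G k) (\<lambda>_. carrier G)"
    by (auto simp: carrier_word_map_group word_map_def)
  have "finite (tuples G k)" unfolding tuples_def using assms by (intro finite_PiE) auto
  then show "finite (PiE (tuples G k) (\<lambda>_. carrier G))" using assms by (intro finite_PiE)
qed

lemma word_map_group_generated: "W.gen_from (\<lambda>i. word_map G k (gen i)) 0 k = carrier W"
proof
  let ?X = "\<lambda>i. word_map G k (gen i)"
  have X: "?X \<in> {..<k} \<rightarrow> carrier W" by (auto simp: carrier_word_map_group)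
  then show "W.gen_from ?X 0 k \<subseteq> carrier W" using W.gen_from_carrier by blast
  have "word_map G k u \<in> W.gen_from ?X 0 k" if "u \<in> words k" for u
    using that
  proof (induct u)
    case Nil
    then show ?case
      using subgroup.one_closed[OF W.gen_from_subgroup[OF X]] by (simp add: word_map_Nil)
  next
    case (Cons a u)
    obtain i b where a: "a = (i, b)" by force
    have i: "i < k" "u \<in> words k" using Cons a by auto
    have "word_map G k [(i, b)] = (if b then inv\<^bsub>W\<^esub> (?X i) else ?X i)"
      using i by (simp add: word_map_word_inv gen_def word_inv_def)
    then have "word_map G k [(i, b)] \<in> W.gen_from ?X 0 k"
      using i W.gen_from_incl[of 0 i k ?X] subgroup.m_inv_closed[OF W.gen_from_subgroup[OF X]] by auto
    then show ?case
      using Cons i a word_map_append[of "[(i, b)]" u] subgroup.m_closed[OF W.gen_from_subgroup[OF X]]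
      by fastforce
  qed
  then show "carrier W \<subseteq> W.gen_from ?X 0 k" by (auto simp: carrier_word_map_group)
qed

definition subst_tuple :: "(nat \<Rightarrow> word) \<Rightarrow> (nat \<Rightarrow> 'a) \<Rightarrow> nat \<Rightarrow> 'a" where
  "subst_tuple \<sigma> g = (\<lambda>i \<in> {..<k}. eval_word G g (\<sigma> i))"

text \<open>On word maps, precomposition with the tuple of values of the words \<sigma> i is the
  substitution x_(i+1) \<mapsto> \<sigma> i.\<close>
definition subst_map :: "(nat \<Rightarrow> word) \<Rightarrow> ((nat \<Rightarrow> 'a) \<Rightarrow> 'a) \<Rightarrow> (nat \<Rightarrow> 'a) \<Rightarrow> 'a" where
  "subst_map \<sigma> f = (\<lambda>g \<in> tuples G k. f (subst_tuple \<sigma> g))"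

lemma subst_tuple_tuples: "\<forall>i<k. \<sigma> i \<in> words k \<Longrightarrow> g \<in> tuples G k \<Longrightarrow> subst_tuple \<sigma> g \<in> tuples G k"
  by (auto simp: subst_tuple_def tuples_def)

lemma eval_subst_word:
  assumes \<sigma>: "\<forall>i<k. \<sigma> i \<in> words k" and g: "g \<in> tuples G k" and u: "u \<in> words k"
  shows "eval_word G g (subst_word \<sigma> u) = eval_word G (subst_tuple \<sigma> g) u"
  using u
proof (induct u)
  case Nil
  then show ?case by (simp add: subst_word_def)
next
  case (Cons a u)
  obtain i b where a: "a = (i, b)" by force
  have "subst_word \<sigma> ((i, b) # u) = (if b then word_inv (\<sigma> i) else \<sigma> i) @ subst_word \<sigma> u"
    by (simp add: subst_word_def)
  then show ?case using Cons a \<sigma> g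
    by (simp add: eval_word_append subst_word_words eval_word_inv subst_tuple_def)
qed

lemma subst_map_word_map:
  "\<forall>i<k. \<sigma> i \<in> words k \<Longrightarrow> u \<in> words k \<Longrightarrow> subst_map \<sigma> (word_map G k u) = word_map G k (subst_word \<sigma> u)"
  unfolding subst_map_def by (rule ext) (simp add: word_map_apply subst_tuple_tuples eval_subst_word word_map_def)

lemma subst_map_gen:
  "\<forall>i<k. \<sigma> i \<in> words k \<Longrightarrow> i < k \<Longrightarrow> subst_map \<sigma> (word_map G k (gen i)) = word_map G k (\<sigma> i)"
  unfolding subst_map_def
  by (rule ext) (auto simp: word_map_def gen_def subst_tuple_def dest: subst_tuple_tuples[unfolded subst_tuple_def])

lemma subst_map_hom: assumes \<sigma>: "\<forall>i<k. \<sigma> i \<in> words k" shows "group_hom W W (subst_map \<sigma>)"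
proof (unfold_locales, rule homI)
  fix f assume "f \<in> carrier W"
  then show "subst_map \<sigma> f \<in> carrier W"
    using \<sigma> by (auto simp: carrier_word_map_group subst_map_word_map subst_word_words)
next
  fix f h
  show "subst_map \<sigma> (f \<otimes>\<^bsub>W\<^esub> h) = subst_map \<sigma> f \<otimes>\<^bsub>W\<^esub> subst_map \<sigma> h"
    unfolding subst_map_def mult_word_map_group by (rule ext) (simp add: subst_tuple_tuples \<sigma>)
qed

lemma subst_map_iso:
  assumes fin: "finite (carrier G)" and \<sigma>: "\<forall>i<k. \<sigma> i \<in> words k"
    and gen: "W.gen_from (\<lambda>i. word_map G k (\<sigma> i)) 0 k = carrier W"
  shows "subst_map \<sigma> \<in> iso W W"
proof -
  interpret h: group_hom W W "subst_map \<sigma>" by (rule subst_map_hom[OF \<sigma>])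
  have "W.gen_from (\<lambda>i. word_map G k (\<sigma> i)) 0 k \<subseteq> subst_map \<sigma> ` carrier W"
    unfolding W.gen_from_def
  proof (rule W.generate_subgroup_incl)
    show "(\<lambda>i. word_map G k (\<sigma> i)) ` {0..<k} \<subseteq> subst_map \<sigma> ` carrier W"
      using \<sigma> subst_map_gen[OF \<sigma>, symmetric] by (force simp: carrier_word_map_group)
  qed (rule h.img_is_subgroup)
  then have surj: "subst_map \<sigma> ` carrier W = carrier W" using gen by auto
  then have "inj_on (subst_map \<sigma>) (carrier W)"
    by (intro eq_card_imp_inj_on finite_word_map_group fin) simp
  then show ?thesis using surj h.homh by (simp add: iso_def bij_betw_def)
qed

lemma automorphicI:
  assumes "\<phi> \<in> iso W W" "v \<in> words k" "\<phi> (word_map G k v) = word_map G k w"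
  shows "automorphic G k w v"
proof -
  have "inv_into (carrier W) \<phi> \<in> iso W W" using assms(1) by (rule W.iso_set_sym)
  moreover have "inv_into (carrier W) \<phi> (word_map G k w) = word_map G k v"
    using assms iso_iff by (metis carrier_word_map_group image_eqI inv_into_f_f)
  ultimately show ?thesis unfolding automorphic_def by blast
qed

lemma subst_map_normal_word:
  assumes k: "k \<ge> 1" and \<sigma>: "\<forall>i<k. \<sigma> i \<in> words k"
  shows "subst_map \<sigma> (word_map G k (normal_word k t)) =
    word_map G k (\<sigma> 0) [^]\<^bsub>W\<^esub> t 0 \<otimes>\<^bsub>W\<^esub> comm_chain W (\<lambda>i. word_map G k (\<sigma> i)) t 1 k"
proof -
  interpret h: group_hom W W "subst_map \<sigma>" by (rule subst_map_hom[OF \<sigma>])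
  let ?x = "\<lambda>i. word_map G k (gen i)"
  have x: "?x \<in> {..<k} \<rightarrow> carrier W" by (auto simp: carrier_word_map_group)
  have "subst_map \<sigma> (word_map G k (normal_word k t)) =
      subst_map \<sigma> (?x 0) [^]\<^bsub>W\<^esub> t 0 \<otimes>\<^bsub>W\<^esub> comm_chain W (subst_map \<sigma> \<circ> ?x) t 1 k"
    using word_map_normal_word[OF k] funcset_mem[OF x, of 0] k W.comm_chain_closed[OF x]
    by (simp add: h.hom_nat_pow h.hom_comm_chain[OF x])
  also have "comm_chain W (subst_map \<sigma> \<circ> ?x) t 1 k = comm_chain W (\<lambda>i. word_map G k (\<sigma> i)) t 1 k"
    by (rule comm_chain_cong) (simp_all add: subst_map_gen[OF \<sigma>])
  finally show ?thesis using k by (simp add: subst_map_gen[OF \<sigma>])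
qed

lemma automorphic_normal_word:
  assumes fin: "finite (carrier G)" and k: "k \<ge> 1"
    and Y: "Y \<in> {..<k} \<rightarrow> carrier W" and gen: "W.gen_from Y 0 k = carrier W"
    and w: "word_map G k w = Y 0 [^]\<^bsub>W\<^esub> t 0 \<otimes>\<^bsub>W\<^esub> comm_chain W Y t 1 k"
  shows "automorphic G k w (normal_word k t)"
proof -
  have "\<forall>i<k. \<exists>u \<in> words k. Y i = word_map G k u" using Y by (auto simp: carrier_word_map_group)
  then obtain \<sigma> where \<sigma>: "\<forall>i<k. \<sigma> i \<in> words k" "\<forall>i<k. Y i = word_map G k (\<sigma> i)" by metis
  have "W.gen_from (\<lambda>i. word_map G k (\<sigma> i)) 0 k = carrier W"
    using gen \<sigma>(2) by (simp add: W.gen_from_def)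
  then have "subst_map \<sigma> \<in> iso W W" by (rule subst_map_iso[OF fin \<sigma>(1)])
  moreover have "comm_chain W (\<lambda>i. word_map G k (\<sigma> i)) t 1 k = comm_chain W Y t 1 k"
    by (rule comm_chain_cong) (simp_all add: \<sigma>(2))
  then have "subst_map \<sigma> (word_map G k (normal_word k t)) = word_map G k w"
    using subst_map_normal_word[OF k \<sigma>(1)] w k \<sigma>(2) by simp
  ultimately show ?thesis by (rule automorphicI[OF _ words_normal_word[OF k]])
qed

end

lemma nilpotent_class_2_class2_group:
  assumes "group G" "nilpotent_class_2 G" shows "class2_group G"
proof -
  interpret group G by (rule assms(1))
  show ?thesis
    using assms(2) commutator_in_derived[of _ "carrier G"]
    by unfold_locales (auto simp: nilpotent_class_2_def)
qed

theorem theorem2p7: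
  fixes G :: "('a, 'b) monoid_scheme" and p k :: nat and w :: word
  assumes "Factorial_Ring.prime p"
    and "finite_p_group G p"
    and "nilpotent_class_2 G"
    and "k \<ge> 1"
    and "w \<in> words k"
  shows "\<exists>t :: nat \<Rightarrow> nat. (\<forall>i < k. t i \<in> power_set_P p) \<and>
           automorphic G k w (normal_word k t)"
proof -
  obtain n where grp: "group G" and fin: "finite (carrier G)" and card: "card (carrier G) = p ^ n"
    using assms(2) by (auto simp: finite_p_group_def)
  interpret word_maps G k by (rule word_maps.intro[OF grp])
  interpret F: class2_p_group W p n
    by (rule class2_p_group_word_map_group[OF nilpotent_class_2_class2_group[OF grp assms(3)] assms(1) card])
  define gens where "gens = (\<lambda>i. word_map G k (gen i))"
  have gens: "gens \<in> {..<k} \<rightarrow> carrier W" and gen: "W.gen_from gens 0 k = carrier W"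
    using word_map_group_generated by (auto simp: gens_def carrier_word_map_group)
  obtain Y t where Y: "F.nielsen_reach 0 k gens Y" "\<forall>i<k. t i \<in> power_set_P p"
    "word_map G k w = Y 0 [^]\<^bsub>W\<^esub> t 0 \<otimes>\<^bsub>W\<^esub> comm_chain W Y t 1 k"
    using F.nielsen_normal_form[OF gens, of "word_map G k w"] assms(4,5) gen
    by (auto simp: carrier_word_map_group)
  have "automorphic G k w (normal_word k t)"
  proof (rule automorphic_normal_word[OF fin assms(4) _ _ Y(3)])
    show "Y \<in> {..<k} \<rightarrow> carrier W" using F.nielsen_reach_funcset[OF Y(1) gens] .
    show "W.gen_from Y 0 k = carrier W" using F.nielsen_reach_gen_from[OF Y(1) gens, of 0] gen by simp
  qed
  then show ?thesis using Y(2) by blast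
qed

end
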